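(* Let $\alpha$ be a constant and let $(e_n)_{n\in\mathbb Z}$ be a sequence of nonzero numbers satisfying $$e_{n-1}e_{n-2}^2e_{n-5}+e_{n-1}^2e_{n-4}^2+e_ne_{n-3}^2e_{n-4}=\alpha\,e_{n-2}^2e_{n-3}^2$$ for all $n$. Put $u_n=\frac{e_ne_{n+3}}{e_{n+1}e_{n+2}}$ and $J=(u_1u_0-\alpha)(u_1+u_0)$. Then for all $n$, $$e_{n+5}e_n+\alpha\,e_{n+4}e_{n+1}+J\,e_{n+3}e_{n+2}=0.$$
   Context: The sequence $u_n$ satisfies $u_{n+1}+u_{n-1}=(\alpha-u_n^2)/u_n$, for which $(u_nu_{n-1}-\alpha)(u_n+u_{n-1})$ is a first integral, so $J$ equals this quantity for every $n$. *)

theory Defs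
  imports Complex_Main
begin

definition u_seq :: "(int \<Rightarrow> complex) \<Rightarrow> int \<Rightarrow> complex" where
  "u_seq e n = (e n * e (n+3)) / (e (n+1) * e (n+2))"

end

theory Submission
  imports Defs
begin

text \<open>In terms of \<open>u\<close> the quartic recurrence for \<open>e\<close> becomes the second order map
  \<open>u(m) (u(m-1) + u(m) + u(m+1)) = \<alpha>\<close>. Eliminating \<open>\<alpha>\<close> with it shows that
  \<open>(u(m) u(m-1) - \<alpha>) (u(m) + u(m-1))\<close> equals \<open>-u(m) (u(m-1) + u(m)) (u(m+1) + u(m))\<close>
  and that the same quantity at \<open>m + 1\<close> equals \<open>-u(m) (u(m+1) + u(m)) (u(m-1) + u(m))\<close>;
  hence it is a first integral \<open>J\<close>. Since \<open>e(n) e(n+5) = e(n+2) e(n+3) u(n) u(n+1) u(n+2)\<close> and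
  \<open>e(n+1) e(n+4) = e(n+2) e(n+3) u(n+1)\<close>, dividing the claimed relation by \<open>e(n+2) e(n+3)\<close> turns
  it into the symmetric expression for \<open>J\<close> at \<open>n + 1\<close>.\<close>

definition first_integral :: "(int \<Rightarrow> 'a::comm_ring) \<Rightarrow> 'a \<Rightarrow> int \<Rightarrow> 'a" where
  "first_integral u \<alpha> m = (u m * u (m-1) - \<alpha>) * (u m + u (m-1))"

lemma first_integral_eq_symmetric:
  assumes "u m * (u (m-1) + u m + u (m+1)) = \<alpha>"
  shows "first_integral u \<alpha> m = - u m * (u (m-1) + u m) * (u (m+1) + u m)"
  unfolding first_integral_def assms[symmetric] by (simp add: algebra_simps)

lemma first_integral_succ_eq_symmetric:
  assumes "u m * (u (m-1) + u m + u (m+1)) = \<alpha>"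
  shows "first_integral u \<alpha> (m+1) = - u m * (u (m-1) + u m) * (u (m+1) + u m)"
  unfolding first_integral_def assms[symmetric] by (simp add: algebra_simps)

lemma first_integral_const:
  assumes "\<And>m. u m * (u (m-1) + u m + u (m+1)) = \<alpha>"
  shows "first_integral u \<alpha> m = first_integral u \<alpha> k"
proof -
  have step: "first_integral u \<alpha> (i+1) = first_integral u \<alpha> i" for i
    using first_integral_eq_symmetric first_integral_succ_eq_symmetric assms by metis
  show ?thesis
  proof (induction m rule: int_induct[where k = k])
    case (step1 i)
    then show ?case using step by simp
  next
    case (step2 i)
    then show ?case using step[of "i-1"] by simp
  qed simp
qed

lemma u_seq_mult_denom:
  assumes "\<And>k. e k \<noteq> 0"
  shows "u_seq e n * (e (n+1) * e (n+2)) = e n * e (n+3)"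
  using assms unfolding u_seq_def by simp

lemma u_seq_triple_product:
  assumes "\<And>k. e k \<noteq> 0"
  shows "u_seq e n * u_seq e (n+1) * u_seq e (n+2) * (e (n+2) * e (n+3)) = e n * e (n+5)"
  using assms unfolding u_seq_def by (simp add: field_simps add.assoc)

lemma u_seq_recurrence:
  fixes e :: "int \<Rightarrow> complex" and \<alpha> :: complex
  assumes nz: "\<And>n. e n \<noteq> 0"
    and rec: "\<And>n. e (n-1) * e (n-2)^2 * e (n-5) + e (n-1)^2 * e (n-4)^2
                 + e n * e (n-3)^2 * e (n-4) = \<alpha> * e (n-2)^2 * e (n-3)^2"
  shows "u_seq e m * (u_seq e (m-1) + u_seq e m + u_seq e (m+1)) = \<alpha>"
proof -
  have rec_m: "e (m+3) * e (m+2)^2 * e (m-1) + e (m+3)^2 * e m^2 + e (m+4) * e (m+1)^2 * e m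
        = \<alpha> * e (m+2)^2 * e (m+1)^2"
    using rec[of "m+4"] by (simp add: algebra_simps)
  have "e (m-1) \<noteq> 0" "e m \<noteq> 0" "e (m+1) \<noteq> 0" "e (m+2) \<noteq> 0" "e (m+3) \<noteq> 0" "e (m+4) \<noteq> 0"
    using nz by auto
  with rec_m show ?thesis
    unfolding u_seq_def by (simp add: field_simps power2_eq_square add.assoc)
qed

theorem proposition5:
  fixes e :: "int \<Rightarrow> complex" and \<alpha> :: complex
  assumes nz: "\<And>n. e n \<noteq> 0"
    and rec: "\<And>n. e (n-1) * e (n-2)^2 * e (n-5) + e (n-1)^2 * e (n-4)^2
                 + e n * e (n-3)^2 * e (n-4) = \<alpha> * e (n-2)^2 * e (n-3)^2"
  shows "\<forall>n. e (n+5) * e n + \<alpha> * e (n+4) * e (n+1)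
          + ((u_seq e 1 * u_seq e 0 - \<alpha>) * (u_seq e 1 + u_seq e 0)) * e (n+3) * e (n+2) = 0"
proof
  fix n :: int
  let ?u = "u_seq e"
  have u_rel: "\<And>m. ?u m * (?u (m-1) + ?u m + ?u (m+1)) = \<alpha>"
    using u_seq_recurrence[OF nz rec] .
  have "(?u 1 * ?u 0 - \<alpha>) * (?u 1 + ?u 0) = first_integral ?u \<alpha> (n+2)"
    using first_integral_const[OF u_rel, of 1 "n+2"] by (simp add: first_integral_def)
  also have "\<dots> = - ?u (n+1) * (?u n + ?u (n+1)) * (?u (n+2) + ?u (n+1))"
    using first_integral_succ_eq_symmetric[OF u_rel[of "n+1"]] by (simp add: add.assoc)
  finally have J: "(?u 1 * ?u 0 - \<alpha>) * (?u 1 + ?u 0)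
      = - ?u (n+1) * (?u n + ?u (n+1)) * (?u (n+2) + ?u (n+1))" .
  have lhs: "e (n+5) * e n + \<alpha> * e (n+4) * e (n+1)
      = (?u n * ?u (n+1) * ?u (n+2) + \<alpha> * ?u (n+1)) * (e (n+2) * e (n+3))"
    using u_seq_triple_product[of e n, OF nz] u_seq_mult_denom[of e "n+1", OF nz]
    by (simp add: algebra_simps add.assoc)
  have "?u n * ?u (n+1) * ?u (n+2) + \<alpha> * ?u (n+1) + (?u 1 * ?u 0 - \<alpha>) * (?u 1 + ?u 0)
      = ?u (n+1) * (\<alpha> - ?u (n+1) * (?u n + ?u (n+1) + ?u (n+2)))"
    unfolding J by (simp add: algebra_simps)
  also have "\<dots> = 0"
    using u_rel[of "n+1"] by (simp add: add.assoc)
  finally have "(?u n * ?u (n+1) * ?u (n+2) + \<alpha> * ?u (n+1) + (?u 1 * ?u 0 - \<alpha>) * (?u 1 + ?u 0))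
      * (e (n+2) * e (n+3)) = 0"
    by simp
  then show "e (n+5) * e n + \<alpha> * e (n+4) * e (n+1)
          + ((?u 1 * ?u 0 - \<alpha>) * (?u 1 + ?u 0)) * e (n+3) * e (n+2) = 0"
    unfolding lhs by (simp only: algebra_simps)
qed

end
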